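(* The couple $\big((\iota(H^1(\delta)),\|\cdot\|_{L^1(\ell^2)}),(\iota(H^2(\delta)),\|\cdot\|_{L^2(\ell^2)})\big)$ is $K$-closed in $\big(L^1([0,1],\ell^2),L^2([0,1],\ell^2)\big)$.
   Context: On $[0,1]$ with Lebesgue measure, $\mathcal{F}_n$ is generated by dyadic intervals of length $2^{-n}$, $\mathbb{E}_n$ the conditional expectation, $\Delta_0=\mathbb{E}_0$, $\Delta_n=\mathbb{E}_n-\mathbb{E}_{n-1}$. $\iota(f)=(\Delta_nf)_{n\ge0}$; $\iota(H^1(\delta))=\{(f_n)\in L^1(\ell^2):\Delta_nf_n=f_n\ \forall n\}$ and $\iota(H^2(\delta))=\{(f_n)\in L^2(\ell^2):\Delta_nf_n=f_n\ \forall n\}$. For Banach spaces $X_0,X_1$ continuously embedded in a common topological vector space, $t>0$ and $f\in X_0+X_1$, $K_t(f,X_0,X_1)=\inf\{\|g\|_{X_0}+t\|h\|_{X_1}: f=g+h,\ g\in X_0,h\in X_1\}$. If $Y_i\subset X_i$ ($i=0,1$), $(Y_0,Y_1)$ is $K$-closed in $(X_0,X_1)$ if there is $C$ with $K_t(f,Y_0,Y_1)\le CK_t(f,X_0,X_1)$ for all $t>0$ and $f\in Y_0+Y_1$. *)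

theory Defs
  imports "HOL-Analysis.Analysis"
begin

definition M01 :: "real measure" where
  "M01 = restrict_space lborel {0..1}"

text \<open>An l2-valued function on [0,1] is represented by its coordinate sequence
  F :: nat => real => real (F n x is the n-th coordinate at x).\<close>
type_synonym seqfun = "nat \<Rightarrow> real \<Rightarrow> real"

definition esqrt :: "ennreal \<Rightarrow> ennreal" where
  "esqrt e = (if e = \<infinity> then \<infinity> else ennreal (sqrt (enn2real e)))"

definition l2sq :: "seqfun \<Rightarrow> real \<Rightarrow> ennreal" where
  "l2sq F x = (\<Sum>n. ennreal ((F n x)\<^sup>2))"

definition L1l2_norm :: "seqfun \<Rightarrow> ennreal" where
  "L1l2_norm F = (\<integral>\<^sup>+ x. esqrt (l2sq F x) \<partial>M01)"

definition L2l2_norm :: "seqfun \<Rightarrow> ennreal" where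
  "L2l2_norm F = esqrt (\<integral>\<^sup>+ x. l2sq F x \<partial>M01)"

definition L1l2 :: "seqfun set" where
  "L1l2 = {F. (\<forall>n. F n \<in> borel_measurable M01) \<and> L1l2_norm F < \<infinity>}"

definition L2l2 :: "seqfun set" where
  "L2l2 = {F. (\<forall>n. F n \<in> borel_measurable M01) \<and> L2l2_norm F < \<infinity>}"

text \<open>Conditional expectation E_n w.r.t. the sigma-algebra generated by the dyadic
  intervals of length 2^-n: average over the dyadic interval containing x.\<close>
definition dyadic_interval :: "nat \<Rightarrow> real \<Rightarrow> real set" where
  "dyadic_interval n x =
     {of_int \<lfloor>2^n * x\<rfloor> / 2^n ..< (of_int \<lfloor>2^n * x\<rfloor> + 1) / 2^n}"

definition cond_exp_dyadic :: "nat \<Rightarrow> (real \<Rightarrow> real) \<Rightarrow> real \<Rightarrow> real" where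
  "cond_exp_dyadic n f x = 2^n * (LINT y:dyadic_interval n x|M01. f y)"

definition Delta :: "nat \<Rightarrow> (real \<Rightarrow> real) \<Rightarrow> real \<Rightarrow> real" where
  "Delta n f x = (if n = 0 then cond_exp_dyadic 0 f x
                  else cond_exp_dyadic n f x - cond_exp_dyadic (n - 1) f x)"

definition mart_diff :: "seqfun \<Rightarrow> bool" where
  "mart_diff F \<longleftrightarrow> (\<forall>n. AE x in M01. Delta n (F n) x = F n x)"

definition iota_H1 :: "seqfun set" where
  "iota_H1 = {F \<in> L1l2. mart_diff F}"

definition iota_H2 :: "seqfun set" where
  "iota_H2 = {F \<in> L2l2. mart_diff F}"

definition decomp :: "seqfun \<Rightarrow> seqfun \<Rightarrow> seqfun \<Rightarrow> bool" where
  "decomp F g h \<longleftrightarrow> (AE x in M01. \<forall>n. F n x = g n x + h n x)"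

definition Kfun :: "seqfun set \<Rightarrow> (seqfun \<Rightarrow> ennreal) \<Rightarrow> seqfun set \<Rightarrow> (seqfun \<Rightarrow> ennreal)
                    \<Rightarrow> real \<Rightarrow> seqfun \<Rightarrow> ennreal" where
  "Kfun X0 N0 X1 N1 t F =
     (INF gh \<in> {(g, h). g \<in> X0 \<and> h \<in> X1 \<and> decomp F g h}.
        N0 (fst gh) + ennreal t * N1 (snd gh))"

definition K_closed :: "seqfun set \<Rightarrow> (seqfun \<Rightarrow> ennreal) \<Rightarrow> seqfun set \<Rightarrow> (seqfun \<Rightarrow> ennreal)
   \<Rightarrow> seqfun set \<Rightarrow> (seqfun \<Rightarrow> ennreal) \<Rightarrow> seqfun set \<Rightarrow> (seqfun \<Rightarrow> ennreal) \<Rightarrow> bool" where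
  "K_closed Y0 NY0 Y1 NY1 X0 NX0 X1 NX1 \<longleftrightarrow>
     (\<exists>C::real. \<forall>t>0. \<forall>F. (\<exists>g\<in>Y0. \<exists>h\<in>Y1. decomp F g h) \<longrightarrow>
        Kfun Y0 NY0 Y1 NY1 t F \<le> ennreal C * Kfun X0 NX0 X1 NX1 t F)"

end

theory Submission
  imports Defs
begin

text \<open>
  Let \<open>F = g\<^sub>0 + h\<^sub>0\<close> with martingale differences \<open>g\<^sub>0 \<in> L\<^sup>1(\<ell>\<^sup>2)\<close>, \<open>h\<^sub>0 \<in> L\<^sup>2(\<ell>\<^sup>2)\<close>, and let
  \<open>F = g + h\<close> be any decomposition in \<open>L\<^sup>1(\<ell>\<^sup>2) + L\<^sup>2(\<ell>\<^sup>2)\<close>. Stop the sequence \<open>(F\<^sub>n)\<close> at the first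
  \<open>n\<close> where \<open>\<Sum>\<^sub>k\<^sub>\<le>\<^sub>n F\<^sub>k\<^sup>2\<close> exceeds \<open>l\<^sup>2\<close>. For the dyadic filtration \<open>|\<Delta>\<^sub>n f|\<close> is already
  \<open>\<F>\<^sub>n\<^sub>-\<^sub>1\<close>-measurable, so this stopping weight is predictable and both the stopped part and the
  remainder are again martingale differences. Pointwise, with \<open>S\<^sup>2 = \<Sum> F\<^sub>n\<^sup>2 \<le> 2|g|\<^sup>2 + 2|h|\<^sup>2\<close>, the
  remainder vanishes unless \<open>S > l\<close>, where \<open>S \<le> 2|g| + 4|h|\<^sup>2/l\<close>; and the stopped part has square
  sum at most \<open>min(S\<^sup>2, l\<^sup>2) \<le> 2l|g| + 2|h|\<^sup>2\<close>. Integrating and choosing \<open>l\<close> in terms of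
  \<open>\<parallel>g\<parallel>\<^sub>1 + t\<parallel>h\<parallel>\<^sub>2\<close> gives \<open>K\<^sub>t(F; H\<^sup>1, H\<^sup>2) \<le> 8 (\<parallel>g\<parallel>\<^sub>1 + t\<parallel>h\<parallel>\<^sub>2)\<close>.
\<close>

section \<open>Functions constant on dyadic intervals\<close>

lemma floor_pow2_Suc_div2: "\<lfloor>(2::real)^m * z\<rfloor> = \<lfloor>(2::real)^Suc m * z\<rfloor> div 2"
proof -
  have "\<lfloor>(2::real)^m * z\<rfloor> = \<lfloor>2 * (2^m * z)\<rfloor> div 2"
    using floor_divide_real_eq_div[of 2 "2 * (2^m * z)"] by simp
  then show ?thesis
    by (simp only: power_Suc mult.assoc)
qed

lemma floor_pow2_eq_mono:
  assumes "k \<le> m" "\<lfloor>(2::real)^m * x\<rfloor> = \<lfloor>(2::real)^m * y\<rfloor>"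
  shows "\<lfloor>(2::real)^k * x\<rfloor> = \<lfloor>(2::real)^k * y\<rfloor>"
  using assms
proof (induction m)
  case (Suc m)
  show ?case
  proof (cases "k = Suc m")
    case False
    then have "k \<le> m"
      using Suc.prems(1) by simp
    moreover have "\<lfloor>(2::real)^m * x\<rfloor> = \<lfloor>(2::real)^m * y\<rfloor>"
      unfolding floor_pow2_Suc_div2[of m x] floor_pow2_Suc_div2[of m y] Suc.prems(2) ..
    ultimately show ?thesis
      using Suc.IH by blast
  qed (use Suc.prems in simp)
qed simp

lemma mem_dyadic_interval_iff:
  "y \<in> dyadic_interval m x \<longleftrightarrow> \<lfloor>(2::real)^m * y\<rfloor> = \<lfloor>(2::real)^m * x\<rfloor>"
proof -
  have "y \<in> dyadic_interval m x \<longleftrightarrow>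
      of_int \<lfloor>2^m * x\<rfloor> \<le> 2^m * y \<and> 2^m * y < of_int \<lfloor>2^m * x\<rfloor> + (1::real)"
    unfolding dyadic_interval_def by (simp add: pos_divide_le_eq pos_less_divide_eq mult.commute)
  then show ?thesis
    by (simp add: floor_eq_iff)
qed

lemma dyadic_interval_eqI:
  "\<lfloor>(2::real)^k * x\<rfloor> = \<lfloor>(2::real)^k * y\<rfloor> \<Longrightarrow> dyadic_interval k x = dyadic_interval k y"
  unfolding dyadic_interval_def by simp

text \<open>\<open>dyadic_const k h\<close>: \<open>h\<close> is \<open>\<F>\<^sub>k\<close>-measurable, as an identity of functions rather than a.e.\<close>

definition dyadic_const :: "nat \<Rightarrow> (real \<Rightarrow> 'a) \<Rightarrow> bool" where
  "dyadic_const k h \<longleftrightarrow> (\<forall>x y. \<lfloor>(2::real)^k * x\<rfloor> = \<lfloor>(2::real)^k * y\<rfloor> \<longrightarrow> h x = h y)"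

lemma dyadic_const_mono: "dyadic_const k h \<Longrightarrow> k \<le> m \<Longrightarrow> dyadic_const m h"
  unfolding dyadic_const_def by (blast dest: floor_pow2_eq_mono)

lemma dyadic_const_comp: "dyadic_const k f \<Longrightarrow> dyadic_const k (\<lambda>x. H (f x))"
  unfolding dyadic_const_def by metis

lemma dyadic_const_comp2:
  "dyadic_const k f \<Longrightarrow> dyadic_const k g \<Longrightarrow> dyadic_const k (\<lambda>x. H (f x) (g x))"
  unfolding dyadic_const_def by metis

lemma dyadic_const_indicator: "dyadic_const k (indicator (dyadic_interval k x) :: real \<Rightarrow> real)"
  unfolding dyadic_const_def
proof (intro allI impI)
  fix y z :: real
  assume "\<lfloor>(2::real)^k * y\<rfloor> = \<lfloor>(2::real)^k * z\<rfloor>"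
  then have "y \<in> dyadic_interval k x \<longleftrightarrow> z \<in> dyadic_interval k x"
    unfolding mem_dyadic_interval_iff by simp
  then show "indicator (dyadic_interval k x) y = (indicator (dyadic_interval k x) z :: real)"
    unfolding indicator_def by simp
qed

lemma dyadic_const_cond_exp: "dyadic_const k (cond_exp_dyadic k f)"
  unfolding dyadic_const_def cond_exp_dyadic_def by (metis dyadic_interval_eqI)

lemma dyadic_const_Delta: "dyadic_const n (Delta n f)"
proof -
  have "dyadic_const n (cond_exp_dyadic (n - 1) f)"
    by (rule dyadic_const_mono[OF dyadic_const_cond_exp diff_le_self])
  then have "dyadic_const n (\<lambda>x. cond_exp_dyadic n f x - cond_exp_dyadic (n - 1) f x)"
    by (rule dyadic_const_comp2[OF dyadic_const_cond_exp])
  then show ?thesis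
    unfolding Delta_def using dyadic_const_cond_exp[of 0 f] by (cases "n = 0") simp_all
qed

lemma dyadic_const_measurable:
  assumes "dyadic_const n h"
  shows "(h :: real \<Rightarrow> real) \<in> borel_measurable M01"
proof -
  have "h x = h (real_of_int \<lfloor>2^n * x\<rfloor> / 2^n)" for x
  proof -
    have "\<lfloor>(2::real)^n * x\<rfloor> = \<lfloor>(2::real)^n * (real_of_int \<lfloor>2^n * x\<rfloor> / 2^n)\<rfloor>"
      by simp
    then show ?thesis
      using assms unfolding dyadic_const_def by blast
  qed
  then have "h = (\<lambda>x. (\<lambda>j. h (real_of_int j / 2^n)) \<lfloor>(2::real)^n * x\<rfloor>)"
    by (intro ext) simp
  also have "\<dots> \<in> borel_measurable lborel"
    by measurable
  finally show ?thesis
    unfolding M01_def by (rule measurable_restrict_space1)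
qed

section \<open>Dyadic conditional expectations and martingale differences\<close>

lemma integrable_indicator_dyadic_interval:
  fixes f :: "real \<Rightarrow> real"
  assumes "integrable M01 f"
  shows "integrable M01 (\<lambda>z. indicator (dyadic_interval k x) z *\<^sub>R f z)"
proof (rule Bochner_Integration.integrable_bound[OF assms])
  show "(\<lambda>z. indicator (dyadic_interval k x) z *\<^sub>R f z) \<in> borel_measurable M01"
    using dyadic_const_measurable[OF dyadic_const_indicator] borel_measurable_integrable[OF assms]
    by (rule borel_measurable_scaleR)
qed (simp add: indicator_def)

lemma cond_exp_dyadic_add:
  fixes u v :: "real \<Rightarrow> real"
  assumes "integrable M01 u" "integrable M01 v"
  shows "cond_exp_dyadic k (\<lambda>y. u y + v y) x = cond_exp_dyadic k u x + cond_exp_dyadic k v x"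
proof -
  have "(LINT y:dyadic_interval k x|M01. u y + v y) =
        (LINT y:dyadic_interval k x|M01. u y) + (LINT y:dyadic_interval k x|M01. v y)"
    unfolding set_lebesgue_integral_def scaleR_add_right
    by (intro Bochner_Integration.integral_add integrable_indicator_dyadic_interval assms)
  then show ?thesis
    unfolding cond_exp_dyadic_def by (simp add: distrib_left)
qed

lemma Delta_add:
  fixes u v :: "real \<Rightarrow> real"
  assumes "integrable M01 u" "integrable M01 v"
  shows "Delta n (\<lambda>y. u y + v y) x = Delta n u x + Delta n v x"
  unfolding Delta_def using cond_exp_dyadic_add[OF assms] by simp

lemma cond_exp_dyadic_cong_AE:
  fixes u v :: "real \<Rightarrow> real"
  assumes "u \<in> borel_measurable M01" "v \<in> borel_measurable M01" "AE y in M01. u y = v y"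
  shows "cond_exp_dyadic k u x = cond_exp_dyadic k v x"
proof -
  note ind = dyadic_const_measurable[OF dyadic_const_indicator]
  have "(LINT y|M01. indicator (dyadic_interval k x) y *\<^sub>R u y) =
        (LINT y|M01. indicator (dyadic_interval k x) y *\<^sub>R v y)"
    using assms(3)
    by (intro integral_cong_AE borel_measurable_scaleR[OF ind] assms(1,2)) (auto elim: AE_mp)
  then show ?thesis
    unfolding cond_exp_dyadic_def set_lebesgue_integral_def by simp
qed

lemma Delta_cong_AE:
  fixes u v :: "real \<Rightarrow> real"
  assumes "u \<in> borel_measurable M01" "v \<in> borel_measurable M01" "AE y in M01. u y = v y"
  shows "Delta n u x = Delta n v x"
  unfolding Delta_def using cond_exp_dyadic_cong_AE[OF assms] by simp

lemma cond_exp_dyadic_mult_dyadic_const: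
  assumes "dyadic_const k w" "k \<le> m"
  shows "cond_exp_dyadic m (\<lambda>y. w y * f y) x = w x * cond_exp_dyadic m f x"
proof -
  have "indicator (dyadic_interval m x) y *\<^sub>R (w y * f y) =
        w x * (indicator (dyadic_interval m x) y *\<^sub>R f y)" for y
  proof (cases "y \<in> dyadic_interval m x")
    case True
    then have "w y = w x"
      using dyadic_const_mono[OF assms] unfolding dyadic_const_def mem_dyadic_interval_iff by blast
    then show ?thesis
      by simp
  qed simp
  then have "(LINT y:dyadic_interval m x|M01. w y * f y) = w x * (LINT y:dyadic_interval m x|M01. f y)"
    unfolding set_lebesgue_integral_def by (simp only: integral_mult_right_zero)
  then show ?thesis
    unfolding cond_exp_dyadic_def by (simp only: mult.left_commute)
qed

lemma Delta_mult_predictable: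
  assumes "dyadic_const (n - 1) w"
  shows "Delta n (\<lambda>y. w y * f y) x = w x * Delta n f x"
  unfolding Delta_def
  using cond_exp_dyadic_mult_dyadic_const[OF assms, of n] cond_exp_dyadic_mult_dyadic_const[OF assms, of "n - 1"]
  by (cases "n = 0") (simp_all add: right_diff_distrib)

text \<open>\<open>\<Delta>\<^sub>m\<^sub>+\<^sub>1 f\<close> is a multiple of the Haar function of each level-\<open>m\<close> interval: it takes opposite
  values on the two halves, so its absolute value is already \<open>\<F>\<^sub>m\<close>-measurable.\<close>

lemma dyadic_const_abs_Delta_Suc:
  fixes f :: "real \<Rightarrow> real"
  assumes f: "integrable M01 f"
  shows "dyadic_const m (\<lambda>x. \<bar>Delta (Suc m) f x\<bar>)"
  unfolding dyadic_const_def
proof (intro allI impI)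
  fix x y :: real
  assume h: "\<lfloor>(2::real)^m * x\<rfloor> = \<lfloor>(2::real)^m * y\<rfloor>"
  define p where "p = \<lfloor>(2::real)^Suc m * x\<rfloor>"
  define q where "q = \<lfloor>(2::real)^Suc m * y\<rfloor>"
  define I where "I z = (LINT w:dyadic_interval (Suc m) z|M01. f w)" for z
  define J where "J = (LINT w:dyadic_interval m x|M01. f w)"
  have "dyadic_interval m y = dyadic_interval m x"
    using dyadic_interval_eqI[OF h] by (rule sym)
  then have Delta_eq: "Delta (Suc m) f x = 2^Suc m * I x - 2^m * J"
    "Delta (Suc m) f y = 2^Suc m * I y - 2^m * J"
    unfolding Delta_def cond_exp_dyadic_def I_def J_def by simp_all
  show "\<bar>Delta (Suc m) f x\<bar> = \<bar>Delta (Suc m) f y\<bar>"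
  proof (cases "p = q")
    case True
    then have "dyadic_interval (Suc m) x = dyadic_interval (Suc m) y"
      unfolding p_def q_def by (rule dyadic_interval_eqI)
    then have "I x = I y"
      unfolding I_def by (rule arg_cong)
    then show ?thesis
      by (simp only: Delta_eq)
  next
    case False
    have halves: "indicator (dyadic_interval m x) z =
        indicator (dyadic_interval (Suc m) x) z + (indicator (dyadic_interval (Suc m) y) z :: real)"
      for z
    proof -
      define r where "r = \<lfloor>(2::real)^Suc m * z\<rfloor>"
      have "z \<in> dyadic_interval m x \<longleftrightarrow> r div 2 = p div 2"
        unfolding mem_dyadic_interval_iff r_def p_def
        by (simp only: floor_pow2_Suc_div2[of m z] floor_pow2_Suc_div2[of m x])
      moreover have "p div 2 = q div 2"
        unfolding p_def q_def by (simp only: floor_pow2_Suc_div2[of m x, symmetric]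
            floor_pow2_Suc_div2[of m y, symmetric] h)
      moreover have "z \<in> dyadic_interval (Suc m) x \<longleftrightarrow> r = p"
        "z \<in> dyadic_interval (Suc m) y \<longleftrightarrow> r = q"
        unfolding mem_dyadic_interval_iff r_def p_def q_def by simp_all
      ultimately show ?thesis
        using False by (auto simp: indicator_def)
    qed
    have "J = I x + I y"
      unfolding I_def J_def set_lebesgue_integral_def halves scaleR_add_left
      by (intro Bochner_Integration.integral_add integrable_indicator_dyadic_interval f)
    then show ?thesis
      using Delta_eq by (simp add: algebra_simps abs_minus_commute)
  qed
qed

lemma dyadic_const_Delta_sq:
  fixes f :: "real \<Rightarrow> real"
  assumes "integrable M01 f" "k \<le> n"
  shows "dyadic_const (n - 1) (\<lambda>x. (Delta k f x)\<^sup>2)"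
proof (cases "k = n \<and> n > 0")
  case True
  then obtain m where "n = Suc m" "k = Suc m"
    using gr0_implies_Suc by blast
  then show ?thesis
    using dyadic_const_comp[OF dyadic_const_abs_Delta_Suc[OF assms(1)], of m "\<lambda>a. a\<^sup>2"] by simp
next
  case False
  then have "k \<le> n - 1"
    using assms(2) by linarith
  then show ?thesis
    by (rule dyadic_const_comp[OF dyadic_const_mono[OF dyadic_const_Delta]])
qed

section \<open>Stopping an \<open>\<ell>\<^sup>2\<close>-valued sequence at level \<open>l\<close>\<close>

text \<open>\<open>stop_weight l z n\<close> is \<open>1\<close> as long as the partial square sum up to \<open>n\<close> has not exceeded \<open>l\<^sup>2\<close>:
  the indicator of \<open>n \<le> \<tau>\<close> for the stopping time \<open>\<tau>\<close> of the square function.\<close>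

definition stop_weight :: "real \<Rightarrow> (nat \<Rightarrow> real) \<Rightarrow> nat \<Rightarrow> real" where
  "stop_weight l z n = (if (\<Sum>k\<le>n. (z k)\<^sup>2) \<le> l\<^sup>2 then 1 else 0)"

definition stopped_head :: "real \<Rightarrow> seqfun \<Rightarrow> seqfun" where
  "stopped_head l F n x = stop_weight l (\<lambda>k. F k x) n * F n x"

definition stopped_tail :: "real \<Rightarrow> seqfun \<Rightarrow> seqfun" where
  "stopped_tail l F n x = (1 - stop_weight l (\<lambda>k. F k x) n) * F n x"

lemma stop_weight_antimono:
  assumes "stop_weight l z N = 1" "n \<le> N"
  shows "stop_weight l z n = 1"
proof -
  have "(\<Sum>k\<le>n. (z k)\<^sup>2) \<le> (\<Sum>k\<le>N. (z k)\<^sup>2)"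
    using assms(2) by (intro sum_mono2) auto
  with assms(1) show ?thesis
    unfolding stop_weight_def by (simp split: if_splits)
qed

lemma sum_stopped_sq_le: "(\<Sum>n<N. (stop_weight l z n * z n)\<^sup>2) \<le> l\<^sup>2"
proof -
  have "(\<Sum>n<N. (stop_weight l z n * z n)\<^sup>2) \<le> l\<^sup>2 \<and>
    ((\<forall>n<N. stop_weight l z n = 1) \<longrightarrow> (\<Sum>n<N. (stop_weight l z n * z n)\<^sup>2) = (\<Sum>n<N. (z n)\<^sup>2))"
  proof (induction N)
    case (Suc N)
    show ?case
    proof (cases "stop_weight l z N = 1")
      case True
      then have "\<forall>n<Suc N. stop_weight l z n = 1"
        using stop_weight_antimono by auto
      moreover have "(\<Sum>n<Suc N. (z n)\<^sup>2) \<le> l\<^sup>2"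
        using True unfolding stop_weight_def lessThan_Suc_atMost by (simp split: if_splits)
      ultimately show ?thesis
        using Suc.IH by simp
    next
      case False
      then have "stop_weight l z N = 0"
        unfolding stop_weight_def by (simp split: if_splits)
      then show ?thesis
        using Suc.IH False by auto
    qed
  qed simp
  then show ?thesis ..
qed

lemma stop_weight_eq_1:
  assumes "summable (\<lambda>n. (z n)\<^sup>2)" "(\<Sum>n. (z n)\<^sup>2) \<le> l\<^sup>2"
  shows "stop_weight l z n = 1"
  using sum_le_suminf[OF assms(1), of "{..n}"] assms(2) unfolding stop_weight_def by simp

lemma suminf_sq_add_le:
  fixes u v :: "nat \<Rightarrow> real"
  assumes "summable (\<lambda>n. (u n)\<^sup>2)" "summable (\<lambda>n. (v n)\<^sup>2)"
  shows "summable (\<lambda>n. (u n + v n)\<^sup>2)"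
    and "(\<Sum>n. (u n + v n)\<^sup>2) \<le> 2 * (\<Sum>n. (u n)\<^sup>2) + 2 * (\<Sum>n. (v n)\<^sup>2)"
proof -
  have le: "(u n + v n)\<^sup>2 \<le> 2 * (u n)\<^sup>2 + 2 * (v n)\<^sup>2" for n
    using sum_squares_bound[of "u n" "v n"] by (simp add: power2_sum)
  have sum2: "summable (\<lambda>n. 2 * (u n)\<^sup>2 + 2 * (v n)\<^sup>2)"
    using assms by (intro summable_add summable_mult)
  show sum: "summable (\<lambda>n. (u n + v n)\<^sup>2)"
    using le by (intro summable_comparison_test'[OF sum2, of 0]) simp
  show "(\<Sum>n. (u n + v n)\<^sup>2) \<le> 2 * (\<Sum>n. (u n)\<^sup>2) + 2 * (\<Sum>n. (v n)\<^sup>2)"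
    using suminf_le[OF le sum sum2] assms
    by (simp add: suminf_add[symmetric] suminf_mult summable_mult)
qed

lemma sqrt_le_of_sq_less:
  fixes l p G H :: real
  assumes l: "l > 0" and p: "l\<^sup>2 < p" "p \<le> 2 * G + 2 * H" and GH: "G \<ge> 0" "H \<ge> 0"
  shows "sqrt p \<le> 2 * sqrt G + 4 * H / l"
proof (cases "4 * H \<le> p")
  case True
  then have "sqrt p \<le> sqrt (4 * G)"
    using p by (intro real_sqrt_le_mono) linarith
  moreover have "0 \<le> 4 * H / l"
    using GH l by simp
  ultimately show ?thesis
    by (simp add: real_sqrt_mult)
next
  case False
  have p0: "0 < p"
    using order.strict_trans1[OF zero_le_power2 p(1)] .
  have "l < sqrt p"
    using p l by (metis abs_of_pos real_less_rsqrt)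
  then have "sqrt p * l \<le> sqrt p * sqrt p"
    using p0 by (intro mult_left_mono) auto
  also have "\<dots> = p"
    using p0 by simp
  finally have "sqrt p * l \<le> p" .
  then have "sqrt p \<le> 4 * H / l"
    using False l by (simp add: pos_le_divide_eq)
  moreover have "0 \<le> sqrt G"
    using GH by simp
  ultimately show ?thesis
    by linarith
qed

lemma le_of_le_sq:
  fixes l p q G H :: real
  assumes l: "l > 0" and q: "q \<le> p" "q \<le> l\<^sup>2" and p: "p \<le> 2 * G + 2 * H" and GH: "G \<ge> 0" "H \<ge> 0"
  shows "q \<le> 2 * l * sqrt G + 2 * H"
proof (cases "sqrt G \<le> l")
  case True
  have "G = sqrt G * sqrt G"
    using GH by simp
  also have "\<dots> \<le> l * sqrt G"
    using True GH by (intro mult_right_mono) auto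
  finally show ?thesis
    using q p by linarith
next
  case False
  then have "l\<^sup>2 \<le> l * sqrt G"
    using l by (simp add: power2_eq_square)
  moreover have "0 \<le> l * sqrt G"
    using l GH by simp
  ultimately show ?thesis
    using q GH by linarith
qed

lemma sq_stopped_le:
  "(stop_weight l z n * a)\<^sup>2 \<le> a\<^sup>2" "((1 - stop_weight l z n) * a)\<^sup>2 \<le> a\<^sup>2"
  unfolding stop_weight_def by simp_all

lemma suminf_stopped_head_le:
  fixes u v :: "nat \<Rightarrow> real"
  assumes l: "l > 0" and u: "summable (\<lambda>n. (u n)\<^sup>2)" and v: "summable (\<lambda>n. (v n)\<^sup>2)"
    and z: "z = (\<lambda>n. u n + v n)"
  shows "summable (\<lambda>n. (stop_weight l z n * z n)\<^sup>2)"
    and "(\<Sum>n. (stop_weight l z n * z n)\<^sup>2) \<le> 2 * l * sqrt (\<Sum>n. (u n)\<^sup>2) + 2 * (\<Sum>n. (v n)\<^sup>2)"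
proof -
  have z_sq: "summable (\<lambda>n. (z n)\<^sup>2)"
    "(\<Sum>n. (z n)\<^sup>2) \<le> 2 * (\<Sum>n. (u n)\<^sup>2) + 2 * (\<Sum>n. (v n)\<^sup>2)"
    unfolding z by (rule suminf_sq_add_le[OF u v])+
  show head: "summable (\<lambda>n. (stop_weight l z n * z n)\<^sup>2)"
    by (rule summable_comparison_test'[OF z_sq(1), of 0]) (simp add: sq_stopped_le)
  show "(\<Sum>n. (stop_weight l z n * z n)\<^sup>2) \<le> 2 * l * sqrt (\<Sum>n. (u n)\<^sup>2) + 2 * (\<Sum>n. (v n)\<^sup>2)"
  proof (rule le_of_le_sq[OF l _ _ z_sq(2)])
    show "(\<Sum>n. (stop_weight l z n * z n)\<^sup>2) \<le> (\<Sum>n. (z n)\<^sup>2)"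
      by (rule suminf_le[OF _ head z_sq(1)]) (simp add: sq_stopped_le)
    show "(\<Sum>n. (stop_weight l z n * z n)\<^sup>2) \<le> l\<^sup>2"
      by (rule suminf_le_const[OF head]) (rule sum_stopped_sq_le)
  qed (use u v in \<open>simp_all add: suminf_nonneg\<close>)
qed

lemma sqrt_suminf_stopped_tail_le:
  fixes u v :: "nat \<Rightarrow> real"
  assumes l: "l > 0" and u: "summable (\<lambda>n. (u n)\<^sup>2)" and v: "summable (\<lambda>n. (v n)\<^sup>2)"
    and z: "z = (\<lambda>n. u n + v n)"
  shows "summable (\<lambda>n. ((1 - stop_weight l z n) * z n)\<^sup>2)"
    and "sqrt (\<Sum>n. ((1 - stop_weight l z n) * z n)\<^sup>2) \<le>
      2 * sqrt (\<Sum>n. (u n)\<^sup>2) + 4 * (\<Sum>n. (v n)\<^sup>2) / l"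
proof -
  have z_sq: "summable (\<lambda>n. (z n)\<^sup>2)"
    "(\<Sum>n. (z n)\<^sup>2) \<le> 2 * (\<Sum>n. (u n)\<^sup>2) + 2 * (\<Sum>n. (v n)\<^sup>2)"
    unfolding z by (rule suminf_sq_add_le[OF u v])+
  show tail: "summable (\<lambda>n. ((1 - stop_weight l z n) * z n)\<^sup>2)"
    by (rule summable_comparison_test'[OF z_sq(1), of 0]) (simp add: sq_stopped_le)
  have nonneg: "(\<Sum>n. (u n)\<^sup>2) \<ge> 0" "(\<Sum>n. (v n)\<^sup>2) \<ge> 0"
    using u v by (simp_all add: suminf_nonneg)
  show "sqrt (\<Sum>n. ((1 - stop_weight l z n) * z n)\<^sup>2) \<le>
      2 * sqrt (\<Sum>n. (u n)\<^sup>2) + 4 * (\<Sum>n. (v n)\<^sup>2) / l"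
  proof (cases "(\<Sum>n. (z n)\<^sup>2) \<le> l\<^sup>2")
    case True
    then show ?thesis
      using stop_weight_eq_1[OF z_sq(1)] nonneg l by simp
  next
    case False
    have "(\<Sum>n. ((1 - stop_weight l z n) * z n)\<^sup>2) \<le> (\<Sum>n. (z n)\<^sup>2)"
      by (rule suminf_le[OF _ tail z_sq(1)]) (simp add: sq_stopped_le)
    then have "sqrt (\<Sum>n. ((1 - stop_weight l z n) * z n)\<^sup>2) \<le> sqrt (\<Sum>n. (z n)\<^sup>2)"
      by (rule real_sqrt_le_mono)
    also have "\<dots> \<le> 2 * sqrt (\<Sum>n. (u n)\<^sup>2) + 4 * (\<Sum>n. (v n)\<^sup>2) / l"
      using False by (intro sqrt_le_of_sq_less[OF l _ z_sq(2) nonneg]) simp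
    finally show ?thesis .
  qed
qed

lemma esqrt_ennreal: "0 \<le> r \<Longrightarrow> esqrt (ennreal r) = ennreal (sqrt r)"
  unfolding esqrt_def by simp

lemma esqrt_mono:
  assumes "a \<le> b"
  shows "esqrt a \<le> esqrt b"
proof (cases "b = \<infinity>")
  case False
  with assms have "a \<noteq> \<infinity>" "enn2real a \<le> enn2real b"
    by (auto simp: top_unique less_top intro: enn2real_mono)
  with False show ?thesis
    unfolding esqrt_def by (simp add: ennreal_leI)
qed (simp add: esqrt_def)

lemma esqrt_less_top_iff: "esqrt e < top \<longleftrightarrow> e < top"
  unfolding esqrt_def by (simp add: less_top)

lemma borel_measurable_esqrt [measurable]: "esqrt \<in> borel_measurable borel"
  unfolding esqrt_def by measurable

lemma borel_measurable_l2sq [measurable]: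
  "(\<And>n. F n \<in> borel_measurable M01) \<Longrightarrow> l2sq F \<in> borel_measurable M01"
  unfolding l2sq_def by measurable

lemma l2sq_eq_ennreal_suminf:
  "summable (\<lambda>n. (F n x)\<^sup>2) \<Longrightarrow> l2sq F x = ennreal (\<Sum>n. (F n x)\<^sup>2)"
  unfolding l2sq_def by (rule suminf_ennreal2) simp_all

lemma summable_of_l2sq_finite:
  assumes "l2sq F x \<noteq> \<infinity>"
  shows "summable (\<lambda>n. (F n x)\<^sup>2)"
proof (rule summable_suminf_not_top)
  show "(\<Sum>n. ennreal ((F n x)\<^sup>2)) \<noteq> top"
    using assms unfolding l2sq_def infinity_ennreal_def .
qed simp

lemma ennreal_sq_le_l2sq: "ennreal ((F n x)\<^sup>2) \<le> l2sq F x"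
proof -
  have "(\<Sum>k\<in>{n}. ennreal ((F k x)\<^sup>2)) \<le> (\<Sum>k. ennreal ((F k x)\<^sup>2))"
    by (rule sum_le_suminf) (auto intro: summableI)
  then show ?thesis
    unfolding l2sq_def by simp
qed

lemma nn_integral_l2sq_finite: "F \<in> L2l2 \<Longrightarrow> (\<integral>\<^sup>+ x. l2sq F x \<partial>M01) < \<infinity>"
  unfolding L2l2_def L2l2_norm_def by (simp add: esqrt_less_top_iff)

lemma AE_l2sq_finite_L1l2:
  assumes "F \<in> L1l2"
  shows "AE x in M01. l2sq F x \<noteq> \<infinity>"
proof -
  have "(\<integral>\<^sup>+ x. esqrt (l2sq F x) \<partial>M01) \<noteq> \<infinity>"
    using assms unfolding L1l2_def L1l2_norm_def by (simp add: less_top)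
  moreover have "l2sq F \<in> borel_measurable M01"
    using assms unfolding L1l2_def by (intro borel_measurable_l2sq) simp
  then have "(\<lambda>x. esqrt (l2sq F x)) \<in> borel_measurable M01"
    by measurable
  ultimately have "AE x in M01. esqrt (l2sq F x) \<noteq> \<infinity>"
    by (intro nn_integral_PInf_AE)
  then show ?thesis
    by eventually_elim (auto simp: esqrt_def)
qed

lemma AE_l2sq_finite_L2l2:
  assumes "F \<in> L2l2"
  shows "AE x in M01. l2sq F x \<noteq> \<infinity>"
proof (rule nn_integral_PInf_AE)
  show "l2sq F \<in> borel_measurable M01"
    using assms unfolding L2l2_def by (intro borel_measurable_l2sq) simp
  show "(\<integral>\<^sup>+ x. l2sq F x \<partial>M01) \<noteq> \<infinity>"
    using nn_integral_l2sq_finite[OF assms] by simp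
qed

lemma integrable_L1l2:
  assumes "F \<in> L1l2"
  shows "integrable M01 (F n)"
proof (rule integrableI_bounded)
  show "F n \<in> borel_measurable M01"
    using assms unfolding L1l2_def by simp
  have "ennreal \<bar>F n x\<bar> \<le> esqrt (l2sq F x)" for x
    using esqrt_mono[OF ennreal_sq_le_l2sq[of F n x]] by (simp add: esqrt_ennreal)
  then have "(\<integral>\<^sup>+ x. ennreal (norm (F n x)) \<partial>M01) \<le> L1l2_norm F"
    unfolding L1l2_norm_def by (intro nn_integral_mono) simp
  also have "\<dots> < \<infinity>"
    using assms unfolding L1l2_def by simp
  finally show "(\<integral>\<^sup>+ x. ennreal (norm (F n x)) \<partial>M01) < \<infinity>" .
qed

lemma finite_measure_M01: "finite_measure M01"
  by (rule finite_measureI) (simp add: M01_def emeasure_restrict_space)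

lemma integrable_L2l2:
  assumes "F \<in> L2l2"
  shows "integrable M01 (F n)"
proof (rule finite_measure.square_integrable_imp_integrable[OF finite_measure_M01])
  show meas: "F n \<in> borel_measurable M01"
    using assms unfolding L2l2_def by simp
  have "(\<integral>\<^sup>+ x. ennreal ((F n x)\<^sup>2) \<partial>M01) \<le> (\<integral>\<^sup>+ x. l2sq F x \<partial>M01)"
    by (intro nn_integral_mono ennreal_sq_le_l2sq)
  also have "\<dots> < \<infinity>"
    by (rule nn_integral_l2sq_finite[OF assms])
  finally show "integrable M01 (\<lambda>x. (F n x)\<^sup>2)"
    using meas by (intro integrableI_nonneg) auto
qed

lemma esqrt_l2sq_stopped_tail_le:
  assumes l: "l > 0" and F: "\<And>n. F n x = g n x + h n x"
    and g: "l2sq g x \<noteq> \<infinity>" and h: "l2sq h x \<noteq> \<infinity>"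
  shows "esqrt (l2sq (stopped_tail l F) x) \<le> 2 * esqrt (l2sq g x) + ennreal (4 / l) * l2sq h x"
proof -
  define G where "G = (\<Sum>n. (g n x)\<^sup>2)"
  define H where "H = (\<Sum>n. (h n x)\<^sup>2)"
  define T where "T = (\<Sum>n. (stopped_tail l F n x)\<^sup>2)"
  note g_sum = summable_of_l2sq_finite[OF g] and h_sum = summable_of_l2sq_finite[OF h]
  have z: "(\<lambda>k. F k x) = (\<lambda>k. g k x + h k x)"
    using F by simp
  note tail = sqrt_suminf_stopped_tail_le[OF l g_sum h_sum z, folded stopped_tail_def]
  have nonneg: "0 \<le> G" "0 \<le> H" "0 \<le> T"
    unfolding G_def H_def T_def using g_sum h_sum tail(1) by (simp_all add: suminf_nonneg)
  have eqs: "l2sq g x = ennreal G" "l2sq h x = ennreal H" "l2sq (stopped_tail l F) x = ennreal T"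
    unfolding G_def H_def T_def using g_sum h_sum tail(1) by (simp_all add: l2sq_eq_ennreal_suminf)
  have "esqrt (l2sq (stopped_tail l F) x) = ennreal (sqrt T)"
    unfolding eqs using nonneg by (simp add: esqrt_ennreal)
  also have "\<dots> \<le> ennreal (2 * sqrt G + 4 / l * H)"
    using tail(2) unfolding G_def H_def T_def by (intro ennreal_leI) simp
  also have "\<dots> = ennreal (2 * sqrt G) + ennreal (4 / l * H)"
    using nonneg l by (intro ennreal_plus) auto
  also have "\<dots> = 2 * esqrt (l2sq g x) + ennreal (4 / l) * l2sq h x"
    unfolding eqs using nonneg l by (simp add: esqrt_ennreal ennreal_mult del: times_divide_eq_left)
  finally show ?thesis .
qed

lemma l2sq_stopped_head_le:
  assumes l: "l > 0" and F: "\<And>n. F n x = g n x + h n x"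
    and g: "l2sq g x \<noteq> \<infinity>" and h: "l2sq h x \<noteq> \<infinity>"
  shows "l2sq (stopped_head l F) x \<le> ennreal (2 * l) * esqrt (l2sq g x) + 2 * l2sq h x"
proof -
  define G where "G = (\<Sum>n. (g n x)\<^sup>2)"
  define H where "H = (\<Sum>n. (h n x)\<^sup>2)"
  note g_sum = summable_of_l2sq_finite[OF g] and h_sum = summable_of_l2sq_finite[OF h]
  have z: "(\<lambda>k. F k x) = (\<lambda>k. g k x + h k x)"
    using F by simp
  note head = suminf_stopped_head_le[OF l g_sum h_sum z, folded stopped_head_def]
  have nonneg: "0 \<le> G" "0 \<le> H"
    unfolding G_def H_def using g_sum h_sum by (simp_all add: suminf_nonneg)
  have eqs: "l2sq g x = ennreal G" "l2sq h x = ennreal H"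
    unfolding G_def H_def using g_sum h_sum by (simp_all add: l2sq_eq_ennreal_suminf)
  have "l2sq (stopped_head l F) x \<le> ennreal (2 * l * sqrt G + 2 * H)"
    using head unfolding G_def H_def by (simp add: l2sq_eq_ennreal_suminf ennreal_leI)
  also have "\<dots> = ennreal (2 * l * sqrt G) + ennreal (2 * H)"
    using nonneg l by (intro ennreal_plus) auto
  also have "\<dots> = ennreal (2 * l) * esqrt (l2sq g x) + 2 * l2sq h x"
    unfolding eqs using nonneg l by (simp add: esqrt_ennreal ennreal_mult)
  finally show ?thesis .
qed

lemma L1l2_norm_stopped_tail_le:
  assumes l: "l > 0" and g: "g \<in> L1l2" and h: "h \<in> L2l2"
    and F: "AE x in M01. \<forall>n. F n x = g n x + h n x"
  shows "L1l2_norm (stopped_tail l F) \<le> 2 * L1l2_norm g + ennreal (4 / l) * (\<integral>\<^sup>+ x. l2sq h x \<partial>M01)"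
proof -
  have "l2sq g \<in> borel_measurable M01" "l2sq h \<in> borel_measurable M01"
    using g h unfolding L1l2_def L2l2_def by (simp_all add: borel_measurable_l2sq)
  then have meas: "(\<lambda>x. esqrt (l2sq g x)) \<in> borel_measurable M01" "l2sq h \<in> borel_measurable M01"
    by measurable
  have "AE x in M01. esqrt (l2sq (stopped_tail l F) x) \<le> 2 * esqrt (l2sq g x) + ennreal (4 / l) * l2sq h x"
    using F AE_l2sq_finite_L1l2[OF g] AE_l2sq_finite_L2l2[OF h]
    by eventually_elim (intro esqrt_l2sq_stopped_tail_le[OF l]; simp)
  then have "L1l2_norm (stopped_tail l F) \<le> (\<integral>\<^sup>+ x. 2 * esqrt (l2sq g x) + ennreal (4 / l) * l2sq h x \<partial>M01)"
    unfolding L1l2_norm_def by (rule nn_integral_mono_AE)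
  also have "\<dots> = 2 * L1l2_norm g + ennreal (4 / l) * (\<integral>\<^sup>+ x. l2sq h x \<partial>M01)"
    unfolding L1l2_norm_def using meas by (simp add: nn_integral_add nn_integral_cmult)
  finally show ?thesis .
qed

lemma nn_integral_l2sq_stopped_head_le:
  assumes l: "l > 0" and g: "g \<in> L1l2" and h: "h \<in> L2l2"
    and F: "AE x in M01. \<forall>n. F n x = g n x + h n x"
  shows "(\<integral>\<^sup>+ x. l2sq (stopped_head l F) x \<partial>M01) \<le>
    ennreal (2 * l) * L1l2_norm g + 2 * (\<integral>\<^sup>+ x. l2sq h x \<partial>M01)"
proof -
  have "l2sq g \<in> borel_measurable M01" "l2sq h \<in> borel_measurable M01"
    using g h unfolding L1l2_def L2l2_def by (simp_all add: borel_measurable_l2sq)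
  then have meas: "(\<lambda>x. esqrt (l2sq g x)) \<in> borel_measurable M01" "l2sq h \<in> borel_measurable M01"
    by measurable
  have "AE x in M01. l2sq (stopped_head l F) x \<le> ennreal (2 * l) * esqrt (l2sq g x) + 2 * l2sq h x"
    using F AE_l2sq_finite_L1l2[OF g] AE_l2sq_finite_L2l2[OF h]
    by eventually_elim (intro l2sq_stopped_head_le[OF l]; simp)
  then have "(\<integral>\<^sup>+ x. l2sq (stopped_head l F) x \<partial>M01) \<le>
      (\<integral>\<^sup>+ x. ennreal (2 * l) * esqrt (l2sq g x) + 2 * l2sq h x \<partial>M01)"
    by (rule nn_integral_mono_AE)
  also have "\<dots> = ennreal (2 * l) * L1l2_norm g + 2 * (\<integral>\<^sup>+ x. l2sq h x \<partial>M01)"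
    unfolding L1l2_norm_def using meas by (simp add: nn_integral_add nn_integral_cmult)
  finally show ?thesis .
qed

section \<open>Stopping preserves martingale differences\<close>

text \<open>Requiring \<open>\<Delta>\<^sub>n F\<^sub>n = F\<^sub>n\<close> everywhere makes \<open>F\<^sub>n\<close> constant on dyadic intervals, which is what the
  predictability argument for the stopping weight needs.\<close>

definition exact_mart_diff :: "seqfun \<Rightarrow> bool" where
  "exact_mart_diff F \<longleftrightarrow> (\<forall>n. integrable M01 (F n) \<and> (\<forall>x. Delta n (F n) x = F n x))"

lemma exact_mart_diffD:
  "exact_mart_diff F \<Longrightarrow> integrable M01 (F n)"
  "exact_mart_diff F \<Longrightarrow> Delta n (F n) x = F n x"
  unfolding exact_mart_diff_def by simp_all

lemma dyadic_const_exact_mart_diff: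
  assumes "exact_mart_diff F"
  shows "dyadic_const n (F n)"
  using dyadic_const_Delta[of n "F n"] exact_mart_diffD(2)[OF assms] by (metis ext)

lemma dyadic_const_sq_exact_mart_diff:
  assumes "exact_mart_diff F" "k \<le> n"
  shows "dyadic_const (n - 1) (\<lambda>x. (F k x)\<^sup>2)"
  using dyadic_const_Delta_sq[OF exact_mart_diffD(1)[OF assms(1), of k] assms(2)]
  by (simp add: exact_mart_diffD(2)[OF assms(1)])

lemma obtain_exact_mart_diff:
  assumes f: "\<And>n. integrable M01 (f n)" and "mart_diff f"
  obtains F where "exact_mart_diff F" "AE x in M01. \<forall>n. F n x = f n x"
proof
  define F where "F n = Delta n (f n)" for n
  have F_ae: "AE x in M01. F n x = f n x" for n
    using \<open>mart_diff f\<close> unfolding mart_diff_def F_def by simp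
  then show "AE x in M01. \<forall>n. F n x = f n x"
    by (simp add: AE_all_countable)
  have F_meas: "F n \<in> borel_measurable M01" for n
    unfolding F_def by (rule dyadic_const_measurable[OF dyadic_const_Delta])
  have "integrable M01 (F n)" for n
    using integrable_cong_AE[OF F_meas borel_measurable_integrable[OF f] F_ae] f by simp
  moreover have "Delta n (F n) x = F n x" for n x
    unfolding F_def[of n] using Delta_cong_AE[OF F_meas borel_measurable_integrable[OF f] F_ae]
    by (simp add: F_def)
  ultimately show "exact_mart_diff F"
    unfolding exact_mart_diff_def by simp
qed

lemma dyadic_const_stop_weight:
  assumes "\<And>k. k \<le> n \<Longrightarrow> dyadic_const m (\<lambda>x. (F k x)\<^sup>2)"
  shows "dyadic_const m (\<lambda>x. stop_weight l (\<lambda>k. F k x) n)"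
  unfolding dyadic_const_def
proof (intro allI impI)
  fix x y :: real
  assume "\<lfloor>(2::real)^m * x\<rfloor> = \<lfloor>(2::real)^m * y\<rfloor>"
  then have "(F k x)\<^sup>2 = (F k y)\<^sup>2" if "k \<le> n" for k
    using assms[OF that] unfolding dyadic_const_def by blast
  then have "(\<Sum>k\<le>n. (F k x)\<^sup>2) = (\<Sum>k\<le>n. (F k y)\<^sup>2)"
    by (intro sum.cong) auto
  then show "stop_weight l (\<lambda>k. F k x) n = stop_weight l (\<lambda>k. F k y) n"
    unfolding stop_weight_def by simp
qed

lemma
  assumes "exact_mart_diff F"
  shows mart_diff_stopped_head: "mart_diff (stopped_head l F)"
    and mart_diff_stopped_tail: "mart_diff (stopped_tail l F)"
    and borel_measurable_stopped_head: "stopped_head l F n \<in> borel_measurable M01"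
    and borel_measurable_stopped_tail: "stopped_tail l F n \<in> borel_measurable M01"
proof -
  define W where "W n x = stop_weight l (\<lambda>k. F k x) n" for n x
  have W: "dyadic_const (n - 1) (W n)" for n
    unfolding W_def[abs_def]
    by (rule dyadic_const_stop_weight[OF dyadic_const_sq_exact_mart_diff[OF assms]])
  have W': "dyadic_const (n - 1) (\<lambda>x. 1 - W n x)" for n
    by (rule dyadic_const_comp[OF W])
  have head: "stopped_head l F n = (\<lambda>x. W n x * F n x)"
    and tail: "stopped_tail l F n = (\<lambda>x. (1 - W n x) * F n x)" for n
    unfolding stopped_head_def stopped_tail_def W_def by simp_all
  show "mart_diff (stopped_head l F)" "mart_diff (stopped_tail l F)"
    unfolding mart_diff_def head tail
    by (simp_all add: Delta_mult_predictable[OF W] Delta_mult_predictable[OF W']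
        exact_mart_diffD(2)[OF assms])
  note F_n = dyadic_const_exact_mart_diff[OF assms, of n]
  have "dyadic_const n (stopped_head l F n)"
    unfolding head by (rule dyadic_const_comp2[OF dyadic_const_mono[OF W] F_n]) simp
  moreover have "dyadic_const n (stopped_tail l F n)"
    unfolding tail by (rule dyadic_const_comp2[OF dyadic_const_mono[OF W'] F_n]) simp
  ultimately show "stopped_head l F n \<in> borel_measurable M01" "stopped_tail l F n \<in> borel_measurable M01"
    by (simp_all add: dyadic_const_measurable)
qed

lemma mart_diff_add:
  assumes "\<And>n. integrable M01 (g n)" "\<And>n. integrable M01 (h n)" "mart_diff g" "mart_diff h"
  shows "mart_diff (\<lambda>n x. g n x + h n x)"
  unfolding mart_diff_def
proof
  fix n
  have "AE x in M01. Delta n (g n) x = g n x" "AE x in M01. Delta n (h n) x = h n x"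
    using assms(3,4) unfolding mart_diff_def by simp_all
  then show "AE x in M01. Delta n (\<lambda>x. g n x + h n x) x = g n x + h n x"
    by eventually_elim (simp add: Delta_add[OF assms(1,2)])
qed

section \<open>The K-functional estimate\<close>

text \<open>The level \<open>l = (A + t\<surd>B) / t\<^sup>2\<close> balances the three terms against \<open>A + t\<surd>B\<close>.\<close>

lemma obtain_stopping_level:
  fixes A B t :: real
  assumes A: "0 \<le> A" and B: "0 \<le> B" and t: "0 < t"
  obtains l where "0 < l" "2 * A + 4 * B / l + t * sqrt (2 * l * A + 2 * B) \<le> 8 * (A + t * sqrt B)"
proof (cases "A + t * sqrt B = 0")
  case True
  moreover have "0 \<le> t * sqrt B"
    using t B by simp
  ultimately have "A = 0" "t * sqrt B = 0"
    using A by linarith+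
  then have "A = 0" "B = 0"
    using t by simp_all
  then show ?thesis
    by (intro that[of 1]) simp_all
next
  case False
  define s where "s = A + t * sqrt B"
  define l where "l = s / t\<^sup>2"
  have tB0: "0 \<le> t * sqrt B"
    using t B by simp
  then have s: "0 < s" "A \<le> s" "t * sqrt B \<le> s"
    using False A unfolding s_def by linarith+
  have "(t * sqrt B)\<^sup>2 \<le> s\<^sup>2"
    using s(3) tB0 by (rule power_mono)
  then have tB: "t\<^sup>2 * B \<le> s\<^sup>2"
    using B by (simp add: power_mult_distrib)
  have "4 * B / l = 4 * (t\<^sup>2 * B) / s"
    unfolding l_def using s t by (simp add: field_simps)
  also have "\<dots> \<le> 4 * s"
    using tB s(1) by (simp add: divide_le_eq power2_eq_square)
  finally have term2: "4 * B / l \<le> 4 * s" .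
  have "t * sqrt (2 * l * A + 2 * B) = sqrt (t\<^sup>2 * (2 * l * A + 2 * B))"
    using t by (simp add: real_sqrt_mult)
  also have "t\<^sup>2 * (2 * l * A + 2 * B) = 2 * (s * A) + 2 * (t\<^sup>2 * B)"
    unfolding l_def using t by (simp add: field_simps)
  also have "sqrt \<dots> \<le> sqrt ((2 * s)\<^sup>2)"
  proof (rule real_sqrt_le_mono)
    have "s * A \<le> s * s"
      using s by (intro mult_left_mono) auto
    then show "2 * (s * A) + 2 * (t\<^sup>2 * B) \<le> (2 * s)\<^sup>2"
      using tB unfolding power2_eq_square by linarith
  qed
  also have "\<dots> = 2 * s"
    using s(1) by (simp only: real_sqrt_abs)
  finally have "t * sqrt (2 * l * A + 2 * B) \<le> 2 * s" .
  then have "2 * A + 4 * B / l + t * sqrt (2 * l * A + 2 * B) \<le> 8 * s"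
    using term2 s(2) by linarith
  moreover have "0 < l"
    unfolding l_def using s t by simp
  ultimately show ?thesis
    using that[of l] unfolding s_def by blast
qed

lemma stopped_split:
  assumes F: "exact_mart_diff F" and g: "g \<in> L1l2" and h: "h \<in> L2l2"
    and Fgh: "AE x in M01. \<forall>n. F n x = g n x + h n x" and t: "0 < t"
  obtains a b where "a \<in> iota_H1" "b \<in> iota_H2" "\<And>n x. F n x = a n x + b n x"
    "L1l2_norm a + ennreal t * L2l2_norm b \<le> 8 * (L1l2_norm g + ennreal t * L2l2_norm h)"
proof -
  define A where "A = enn2real (L1l2_norm g)"
  define B where "B = enn2real (\<integral>\<^sup>+ x. l2sq h x \<partial>M01)"
  have A: "0 \<le> A" "L1l2_norm g = ennreal A"
    using g unfolding A_def L1l2_def by (simp_all add: less_top)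
  have B: "0 \<le> B" "(\<integral>\<^sup>+ x. l2sq h x \<partial>M01) = ennreal B"
    using nn_integral_l2sq_finite[OF h] unfolding B_def by (simp_all add: less_top)
  have h_norm: "L2l2_norm h = ennreal (sqrt B)"
    unfolding L2l2_norm_def B(2) by (rule esqrt_ennreal[OF B(1)])
  obtain l where l: "0 < l"
    and level: "2 * A + 4 * B / l + t * sqrt (2 * l * A + 2 * B) \<le> 8 * (A + t * sqrt B)"
    using obtain_stopping_level[OF A(1) B(1) t] .
  define a where "a = stopped_tail l F"
  define b where "b = stopped_head l F"
  have "L1l2_norm a \<le> 2 * ennreal A + ennreal (4 / l) * ennreal B"
    unfolding a_def A(2)[symmetric] B(2)[symmetric] by (rule L1l2_norm_stopped_tail_le[OF l g h Fgh])
  also have "\<dots> = ennreal (2 * A) + ennreal (4 / l * B)"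
    using A(1) B(1) l by (simp add: ennreal_mult del: times_divide_eq_left)
  also have "\<dots> = ennreal (2 * A + 4 * B / l)"
    using A(1) B(1) l by (simp flip: ennreal_plus)
  finally have a_norm: "L1l2_norm a \<le> ennreal (2 * A + 4 * B / l)" .
  have "(\<integral>\<^sup>+ x. l2sq b x \<partial>M01) \<le> ennreal (2 * l) * ennreal A + 2 * ennreal B"
    unfolding b_def A(2)[symmetric] B(2)[symmetric] by (rule nn_integral_l2sq_stopped_head_le[OF l g h Fgh])
  also have "\<dots> = ennreal (2 * l * A + 2 * B)"
    using A(1) B(1) l by (simp add: ennreal_plus ennreal_mult)
  finally have "L2l2_norm b \<le> esqrt (ennreal (2 * l * A + 2 * B))"
    unfolding L2l2_norm_def by (rule esqrt_mono)
  also have "\<dots> = ennreal (sqrt (2 * l * A + 2 * B))"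
    using A(1) B(1) l by (intro esqrt_ennreal) simp
  finally have b_norm: "L2l2_norm b \<le> ennreal (sqrt (2 * l * A + 2 * B))" .
  show ?thesis
  proof
    show "a \<in> iota_H1"
      using a_norm mart_diff_stopped_tail[OF F] borel_measurable_stopped_tail[OF F]
      unfolding a_def iota_H1_def L1l2_def by (auto simp: le_less_trans)
    show "b \<in> iota_H2"
      using b_norm mart_diff_stopped_head[OF F] borel_measurable_stopped_head[OF F]
      unfolding b_def iota_H2_def L2l2_def by (auto simp: le_less_trans)
    show "F n x = a n x + b n x" for n x
      unfolding a_def b_def stopped_head_def stopped_tail_def by (simp add: algebra_simps)
    have "L1l2_norm a + ennreal t * L2l2_norm b \<le>
        ennreal (2 * A + 4 * B / l) + ennreal t * ennreal (sqrt (2 * l * A + 2 * B))"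
      using a_norm b_norm by (intro add_mono mult_left_mono) auto
    also have "\<dots> = ennreal (2 * A + 4 * B / l + t * sqrt (2 * l * A + 2 * B))"
      using A(1) B(1) l t by (simp add: ennreal_plus ennreal_mult)
    also have "\<dots> \<le> ennreal (8 * (A + t * sqrt B))"
      using level by (rule ennreal_leI)
    also have "\<dots> = 8 * (L1l2_norm g + ennreal t * L2l2_norm h)"
      unfolding A(2) h_norm using A(1) B(1) t by (simp add: ennreal_plus ennreal_mult)
    finally show "L1l2_norm a + ennreal t * L2l2_norm b \<le> 8 * (L1l2_norm g + ennreal t * L2l2_norm h)" .
  qed
qed

lemma Kfun_le:
  assumes "g \<in> X0" "h \<in> X1" "decomp F g h"
  shows "Kfun X0 N0 X1 N1 t F \<le> N0 g + ennreal t * N1 h"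
  unfolding Kfun_def using assms by (intro INF_lower2[of "(g, h)"]) auto

lemma le_cmult_KfunI:
  fixes C :: real
  assumes "0 < C"
    and bound: "\<And>g h. g \<in> X0 \<Longrightarrow> h \<in> X1 \<Longrightarrow> decomp F g h \<Longrightarrow> K \<le> ennreal C * (N0 g + ennreal t * N1 h)"
  shows "K \<le> ennreal C * Kfun X0 N0 X1 N1 t F"
proof -
  have "K / ennreal C \<le> Kfun X0 N0 X1 N1 t F"
    unfolding Kfun_def using assms by (intro INF_greatest divide_le_posI_ennreal) auto
  then have "K / ennreal C * ennreal C \<le> Kfun X0 N0 X1 N1 t F * ennreal C"
    by (rule mult_right_mono) simp
  moreover have "K / ennreal C * ennreal C = K"
    using assms(1) by (simp add: ennreal_divide_times)
  ultimately show ?thesis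
    by (simp add: mult.commute)
qed

lemma obtain_exact_mart_diff_of_decomp:
  assumes g0: "g0 \<in> iota_H1" and h0: "h0 \<in> iota_H2" and F0: "decomp F g0 h0"
  obtains F' where "exact_mart_diff F'" "AE x in M01. \<forall>n. F' n x = F n x"
proof -
  have int: "\<And>n. integrable M01 (g0 n)" "\<And>n. integrable M01 (h0 n)"
    using g0 h0 unfolding iota_H1_def iota_H2_def by (auto intro: integrable_L1l2 integrable_L2l2)
  have "mart_diff (\<lambda>n x. g0 n x + h0 n x)"
    using g0 h0 unfolding iota_H1_def iota_H2_def by (intro mart_diff_add int) auto
  then obtain F' where F': "exact_mart_diff F'" and F'_sum: "AE x in M01. \<forall>n. F' n x = g0 n x + h0 n x"
    using obtain_exact_mart_diff[of "\<lambda>n x. g0 n x + h0 n x"] int by blast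
  have "AE x in M01. \<forall>n. F' n x = F n x"
    using F'_sum F0 unfolding decomp_def by eventually_elim simp
  with F' show ?thesis
    by (rule that)
qed

lemma Kfun_iota_le:
  assumes t: "0 < t" and F': "exact_mart_diff F'" and F'_ae: "AE x in M01. \<forall>n. F' n x = F n x"
    and g: "g \<in> L1l2" and h: "h \<in> L2l2" and Fgh: "decomp F g h"
  shows "Kfun iota_H1 L1l2_norm iota_H2 L2l2_norm t F \<le> ennreal 8 * (L1l2_norm g + ennreal t * L2l2_norm h)"
proof -
  have "AE x in M01. \<forall>n. F' n x = g n x + h n x"
    using F'_ae Fgh unfolding decomp_def by eventually_elim simp
  then obtain a b where a: "a \<in> iota_H1" and b: "b \<in> iota_H2" and ab: "\<And>n x. F' n x = a n x + b n x"
    and bound: "L1l2_norm a + ennreal t * L2l2_norm b \<le> 8 * (L1l2_norm g + ennreal t * L2l2_norm h)"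
    using stopped_split[OF F' g h _ t] by blast
  have "decomp F a b"
    using F'_ae unfolding decomp_def by eventually_elim (simp add: ab)
  then have "Kfun iota_H1 L1l2_norm iota_H2 L2l2_norm t F \<le> L1l2_norm a + ennreal t * L2l2_norm b"
    by (rule Kfun_le[OF a b])
  then show ?thesis
    using bound by simp
qed

theorem corollary4p11:
  shows "K_closed iota_H1 L1l2_norm iota_H2 L2l2_norm L1l2 L1l2_norm L2l2 L2l2_norm"
  unfolding K_closed_def
proof (intro exI[of _ 8] allI impI)
  fix t :: real and F :: seqfun
  assume t: "0 < t" and "\<exists>g\<in>iota_H1. \<exists>h\<in>iota_H2. decomp F g h"
  then obtain F' where F': "exact_mart_diff F'" and F'_ae: "AE x in M01. \<forall>n. F' n x = F n x"
    using obtain_exact_mart_diff_of_decomp by blast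
  show "Kfun iota_H1 L1l2_norm iota_H2 L2l2_norm t F \<le> ennreal 8 * Kfun L1l2 L1l2_norm L2l2 L2l2_norm t F"
    using Kfun_iota_le[OF t F' F'_ae] by (intro le_cmult_KfunI) simp_all
qed

end
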